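(* Let $q\ge 1$ and $n\ge 0$. The map $\phi$ defined below restricts to a bijection from $\mathcal{B}_n(1^{q+1})$ onto $\mathcal{W}^q_n$. Here, for $w\in\mathcal{B}_n(1^{q+1})$, $\phi(w)$ is defined recursively by $$\phi(w)=\begin{cases}1^k & \text{if } w=1^k,\ k\in[0,q],\\ \psi(\phi(v)) & \text{if } w=1^q0v,\\ \phi(v)\,01^k & \text{if } w=1^k0v,\ k\in[0,q-1],\end{cases}$$ and $\psi$ is the map from $\mathcal{B}_m$ to $\mathcal{B}_{m+q+1}$ given by $\psi(v01^k)=v001^{k+q}$ for any binary word $v$ and $k\ge 0$, and $\psi(1^m)=1^{m+q+1}$.
   Context: $\mathcal{B}_n$ is the set of binary words (over $\{0,1\}$) of length $n$; $\mathcal{B}_n(1^{q+1})$ is the set of words in $\mathcal{B}_n$ having no factor (block of consecutive letters) equal to $1^{q+1}$. For $q\ge1$, a binary word is $q$-decreasing if for every maximal run of $0$s, of length $a>0$, together with the (possibly empty) maximal run of $1$s immediately following it, of length $b\ge 0$, one has $q\cdot a>b$. $\mathcal{W}^q_n$ denotes the set of $q$-decreasing words of length $n$. Exponents denote repetition, e.g. $1^k$ is $k$ consecutive $1$s. *)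

theory Defs
  imports Main "HOL-Library.Sublist"
begin

text \<open>Binary words are represented as bool lists: True = letter 1, False = letter 0.\<close>

definition binwords :: "nat \<Rightarrow> bool list set" where
  "binwords n = {w. length w = n}"

definition avoid_words :: "nat \<Rightarrow> nat \<Rightarrow> bool list set" where
  "avoid_words q n = {w \<in> binwords n. \<not> sublist (replicate (Suc q) True) w}"

text \<open>q-decreasing: for every maximal run 0^a (a>0) followed by the maximal
  (possibly empty) run 1^b, q*a > b.\<close>
definition q_decreasing :: "nat \<Rightarrow> bool list \<Rightarrow> bool" where
  "q_decreasing q w \<longleftrightarrow>
     (\<forall>u a b v. w = u @ replicate a False @ replicate b True @ v \<and> 0 < a
        \<and> (u = [] \<or> last u = True)
        \<and> (b = 0 \<longrightarrow> v = [])
        \<and> (v = [] \<or> hd v = False)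
        \<longrightarrow> b < q * a)"

definition W_words :: "nat \<Rightarrow> nat \<Rightarrow> bool list set" where
  "W_words q n = {w \<in> binwords n. q_decreasing q w}"

definition psi :: "nat \<Rightarrow> bool list \<Rightarrow> bool list" where
  "psi q u = (if \<forall>x\<in>set u. x then replicate (length u + q + 1) True
              else (let k = length (takeWhile id (rev u));
                        v = take (length u - k - 1) u
                    in v @ [False, False] @ replicate (k + q) True))"

text \<open>phi, defined recursively; on words outside B_n(1^(q+1)) its value is irrelevant.\<close>
function phi :: "nat \<Rightarrow> bool list \<Rightarrow> bool list" where
  "phi q w = (let k = length (takeWhile id w) in
     if k = length w then w
     else (let v = drop (Suc k) w in
           if k = q then psi q (phi q v)
           else phi q v @ False # replicate k True))"
  by auto
termination
  apply (relation "measure (\<lambda>(q, w). length w)")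
   apply auto
   apply (case_tac w; simp)+
  done

end

theory Submission
  imports Defs
begin

(* The output of phi q records which clause produced it: the clause for 1^k 0 v with k < q
   leaves a final run 0 1^k with fewer than q ones, psi q u is either all ones of length > q or
   ends in a run 0 1^j with j >= q, and 1^k with k <= q arises only from w = 1^k. So phi can be
   undone clause by clause, which gives injectivity.
   Being q-decreasing is a condition on runs: appending a run 0^a 1^b (a > 0) to a word that is
   empty or ends in 1 keeps it q-decreasing iff b < q a. Hence appending 0 1^k with k < q
   preserves the property, and psi, which lengthens the last run of zeros by one and the run of
   ones after it by q, preserves and reflects it. Conversely a q-decreasing word ending in
   0 1^k with k >= q has another 0 before that run, so it lies in the image of psi. Induction on
   the length then shows that phi maps B_n(1^(q+1)) onto W^q_n. *)

abbreviation ones :: "nat \<Rightarrow> bool list" where "ones k \<equiv> replicate k True"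
abbreviation zeros :: "nat \<Rightarrow> bool list" where "zeros k \<equiv> replicate k False"

declare phi.simps [simp del]

lemma ones_prefix_cases:
  obtains (ones) k where "w = ones k" | (block) k v where "w = ones k @ False # v"
proof (induction w arbitrary: thesis)
  case Nil
  then show ?case using Nil.prems(1)[of 0] by simp
next
  case (Cons x w)
  show ?case
  proof (cases x)
    case False
    then show ?thesis using Cons.prems(2)[of 0 w] by simp
  next
    case True
    show ?thesis
    proof (rule Cons.IH)
      fix k assume "w = ones k"
      then show ?thesis using Cons.prems(1)[of "Suc k"] True by simp
    next
      fix k v assume "w = ones k @ False # v"
      then show ?thesis using Cons.prems(2)[of "Suc k" v] True by simp
    qed
  qed
qed

lemma ones_suffix_cases:
  obtains (ones) k where "w = ones k" | (block) y k where "w = y @ False # ones k"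
proof (cases "rev w" rule: ones_prefix_cases)
  case (ones k)
  then show thesis using that(1) by (metis rev_replicate rev_rev_ident)
next
  case (block k v)
  then have "w = rev (ones k @ False # v)" by (metis rev_rev_ident)
  then have "w = rev v @ False # ones k" by simp
  then show thesis by (rule that(2))
qed

lemma takeWhile_ones_False [simp]: "takeWhile id (ones k @ False # v) = ones k"
  by (induction k) auto

lemma ones_False_eq_iff:
  "ones k @ False # v = ones k' @ False # v' \<longleftrightarrow> k = k' \<and> v = v'"
  by (metis length_replicate same_append_eq takeWhile_ones_False list.inject)

lemma append_False_ones_eq_iff:
  "y @ False # ones k = y' @ False # ones k' \<longleftrightarrow> y = y' \<and> k = k'"
proof
  assume eq: "y @ False # ones k = y' @ False # ones k'"
  have "ones k @ False # rev y = ones k' @ False # rev y'"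
    using arg_cong[OF eq, of rev] by simp
  then show "y = y' \<and> k = k'" by (simp add: ones_False_eq_iff)
qed simp

lemma notin_set_neq_append_False [simp]:
  "False \<notin> set xs \<Longrightarrow> xs \<noteq> y @ False # z"
  "False \<notin> set xs \<Longrightarrow> y @ False # z \<noteq> xs"
  by auto

lemma sublist_ones_ones_iff: "sublist (ones m) (ones k) \<longleftrightarrow> m \<le> k"
proof
  show "m \<le> k" if "sublist (ones m) (ones k)"
    using sublist_length_le[OF that] by simp
  show "sublist (ones m) (ones k)" if "m \<le> k"
  proof -
    have "ones k = ones m @ ones (k - m)"
      using that by (simp flip: replicate_add)
    then show ?thesis by (metis sublist_append_rightI)
  qed
qed

lemma sublist_ones_ones_False_iff:
  assumes "0 < m"
  shows "sublist (ones m) (ones k @ False # v) \<longleftrightarrow> m \<le> k \<or> sublist (ones m) v"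
proof
  assume "sublist (ones m) (ones k @ False # v)"
  then consider "sublist (ones m) (ones k)" | "sublist (ones m) (False # v)"
    | xs1 xs2 where "ones m = xs1 @ xs2" "suffix xs1 (ones k)" "prefix xs2 (False # v)"
    unfolding sublist_append by blast
  then show "m \<le> k \<or> sublist (ones m) v"
  proof cases
    case 1
    then show ?thesis by (simp add: sublist_ones_ones_iff)
  next
    case 2
    then show ?thesis using assms by (cases m) (auto simp: sublist_Cons_right)
  next
    case 3
    have "length xs1 \<le> k" using suffix_length_le[OF 3(2)] by simp
    moreover have "xs2 = []"
    proof (rule ccontr)
      assume "xs2 \<noteq> []"
      then have "\<not> hd xs2" using 3(3) by (cases xs2) auto
      moreover have "hd xs2 \<in> set (ones m)" using 3(1) \<open>xs2 \<noteq> []\<close> by simp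
      ultimately show False by simp
    qed
    ultimately show ?thesis using 3(1) by (metis append_Nil2 length_replicate)
  qed
next
  assume "m \<le> k \<or> sublist (ones m) v"
  then show "sublist (ones m) (ones k @ False # v)"
  proof
    assume "m \<le> k"
    then have "sublist (ones m) (ones k)" by (simp add: sublist_ones_ones_iff)
    then show ?thesis by (rule sublist_order.order.trans) (rule sublist_append_rightI)
  next
    assume "sublist (ones m) v"
    moreover have "sublist v ((ones k @ [False]) @ v)" by (rule sublist_append_leftI)
    ultimately show ?thesis by (simp add: sublist_order.order.trans)
  qed
qed

(* A constant rather than an abbreviation: the simplifier rewrites ones (Suc q) to True # ones q,
   after which lemmas about ones (Suc q) no longer match. *)
definition avoids_ones :: "nat \<Rightarrow> bool list \<Rightarrow> bool" where
  "avoids_ones q w \<longleftrightarrow> \<not> sublist (ones (Suc q)) w"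

lemma avoids_ones_ones [simp]: "avoids_ones q (ones k) \<longleftrightarrow> k \<le> q"
  by (simp add: avoids_ones_def sublist_ones_ones_iff Suc_le_eq not_less del: replicate_Suc)

lemma avoids_ones_ones_False [simp]:
  "avoids_ones q (ones k @ False # v) \<longleftrightarrow> k \<le> q \<and> avoids_ones q v"
  by (simp add: avoids_ones_def sublist_ones_ones_False_iff Suc_le_eq not_less del: replicate_Suc)

lemma phi_ones: "phi q (ones k) = ones k"
  by (simp add: phi.simps)

lemma phi_ones_False:
  "phi q (ones k @ False # v) = (if k = q then psi q (phi q v) else phi q v @ False # ones k)"
  by (simp add: phi.simps Let_def)

lemma psi_ones: "psi q (ones m) = ones (m + q + 1)"
  by (simp add: psi_def)

lemma psi_append_False_ones: "psi q (y @ False # ones k) = y @ False # False # ones (k + q)"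
  by (simp add: psi_def Let_def)

lemma length_psi [simp]: "length (psi q u) = length u + q + 1"
  by (cases u rule: ones_suffix_cases) (simp_all add: psi_ones psi_append_False_ones)

lemma length_phi [simp]: "length (phi q w) = length w"
proof (induction "length w" arbitrary: w rule: less_induct)
  case less
  show ?case
    by (cases w rule: ones_prefix_cases) (simp_all add: phi_ones phi_ones_False less)
qed

lemma inj_psi: "inj (psi q)"
proof (rule injI)
  fix u u' assume eq: "psi q u = psi q u'"
  show "u = u'"
  proof (cases u rule: ones_suffix_cases)
    case u: (ones m)
    show ?thesis
      by (cases u' rule: ones_suffix_cases)
         (use eq u in \<open>simp_all add: psi_ones psi_append_False_ones\<close>)
  next
    case u: (block y k)
    show ?thesis
    proof (cases u' rule: ones_suffix_cases)
      case (ones m')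
      then show ?thesis using eq u by (simp add: psi_ones psi_append_False_ones)
    next
      case (block y' k')
      then have "(y @ [False]) @ False # ones (k + q) = (y' @ [False]) @ False # ones (k' + q)"
        using eq u by (simp add: psi_append_False_ones)
      then show ?thesis
        using u block by (simp only: append_False_ones_eq_iff) simp
    qed
  qed
qed

lemma psi_neq_ones:
  "m \<le> q \<Longrightarrow> psi q u \<noteq> ones m"
  "m \<le> q \<Longrightarrow> ones m \<noteq> psi q u"
  by (auto dest: arg_cong[of _ _ length])

lemma psi_neq_append_False_ones:
  "k < q \<Longrightarrow> psi q u \<noteq> y @ False # ones k"
  "k < q \<Longrightarrow> y @ False # ones k \<noteq> psi q u"
proof -
  assume "k < q"
  then show "psi q u \<noteq> y @ False # ones k"
  proof (cases u rule: ones_suffix_cases)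
    case (block y' k')
    then show ?thesis
      using append_False_ones_eq_iff[of "y' @ [False]" "k' + q" y k] \<open>k < q\<close>
      by (simp add: psi_append_False_ones)
  qed (simp add: psi_ones)
  then show "y @ False # ones k \<noteq> psi q u" by simp
qed

lemma inj_on_phi: "inj_on (phi q) {w. avoids_ones q w}"
proof -
  have "w = w'" if "phi q w = phi q w'" "avoids_ones q w" "avoids_ones q w'"
    for w w'
    using that
  proof (induction "length w" arbitrary: w w' rule: less_induct)
    case less
    then show ?case
    proof (cases w rule: ones_prefix_cases)
      case w: (ones m)
      then have "m \<le> q" using less.prems by simp
      then show ?thesis
        using less.prems w
        by (cases w' rule: ones_prefix_cases)
           (auto simp: phi_ones phi_ones_False psi_neq_ones)
    next
      case w: (block k v)
      show ?thesis
      proof (cases w' rule: ones_prefix_cases)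
        case (ones m')
        then show ?thesis
          using less.prems w
          by (auto simp: phi_ones phi_ones_False psi_neq_ones split: if_splits)
      next
        case w': (block k' v')
        have avoid: "avoids_ones q v" "avoids_ones q v'" "k \<le> q" "k' \<le> q"
          using less.prems w w' by auto
        have "phi q v = phi q v' \<and> k = k'"
          using less.prems(1) avoid(3,4) unfolding w w' phi_ones_False
          by (auto simp: append_False_ones_eq_iff psi_neq_append_False_ones inj_eq[OF inj_psi]
                   split: if_splits)
        then show ?thesis
          using less.hyps[of v v'] avoid w w' by simp
      qed
    qed
  qed
  then show ?thesis by (auto intro: inj_onI)
qed

lemma q_decreasing_iff_runs:
  assumes "0 < q"
  shows "q_decreasing q w \<longleftrightarrow>
    (\<forall>u a b v. w = u @ zeros a @ ones b @ v \<and> 0 < a \<and> (u = [] \<or> last u) \<and> (v = [] \<or> \<not> hd v)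
       \<longrightarrow> b < q * a)"
proof (intro iffI allI impI)
  fix u a b v
  assume H: "q_decreasing q w"
    and run: "w = u @ zeros a @ ones b @ v \<and> 0 < a \<and> (u = [] \<or> last u) \<and> (v = [] \<or> \<not> hd v)"
  show "b < q * a"
  proof (cases "b = 0")
    case True
    then show ?thesis using assms run by simp
  next
    case False
    then show ?thesis using H run unfolding q_decreasing_def by auto
  qed
qed (auto simp: q_decreasing_def)

lemma q_decreasing_ones: "q_decreasing q (ones m)"
  unfolding q_decreasing_def by (auto dest!: arg_cong[of _ _ "\<lambda>x. False \<in> set x"])

lemma takeWhile_rev_append_zeros_ones:
  "0 < a \<Longrightarrow> takeWhile id (rev (y @ zeros a @ ones b)) = ones b"
proof -
  assume "0 < a"
  then obtain n where "a = Suc n" using gr0_implies_Suc by blast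
  moreover have "rev (y @ zeros a @ ones b) = ones b @ zeros a @ rev y" by simp
  ultimately show ?thesis by (simp only: replicate_Suc append_Cons takeWhile_ones_False)
qed

lemma takeWhile_zeros_True [simp]: "takeWhile Not (zeros a @ True # v) = zeros a"
  by (induction a) auto

lemma takeWhile_Not_rev_append_zeros:
  "y = [] \<or> last y \<Longrightarrow> takeWhile Not (rev (y @ zeros a)) = zeros a"
  by (cases y rule: rev_cases) auto

lemma final_run_unique:
  assumes "y @ zeros a @ ones b = u @ zeros a' @ ones b'" "0 < a" "0 < a'"
    "y = [] \<or> last y" "u = [] \<or> last u"
  shows "a = a' \<and> b = b'"
proof -
  have "b = b'"
    using arg_cong[OF assms(1), of "\<lambda>x. length (takeWhile id (rev x))"] assms(2,3)
    by (simp only: takeWhile_rev_append_zeros_ones length_replicate)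
  then have zeros_eq: "y @ zeros a = u @ zeros a'"
    using assms(1) by simp
  have "a = a'"
    using arg_cong[OF zeros_eq, of "\<lambda>x. length (takeWhile Not (rev x))"] assms(4,5)
    by (simp only: takeWhile_Not_rev_append_zeros length_replicate)
  with \<open>b = b'\<close> show ?thesis by simp
qed

lemma nonfinal_run_within_prefix:
  assumes eq: "y @ zeros a @ ones b = u @ zeros a' @ ones b' @ v"
    and "0 < b'" "v \<noteq> []" "\<not> hd v"
  shows "\<exists>v'. y = u @ zeros a' @ ones b' @ v' \<and> (v' = [] \<or> \<not> hd v')"
proof -
  from eq have "(u @ zeros a' @ ones b') @ v = y @ (zeros a @ ones b)" by simp
  then obtain us where
    "u @ zeros a' @ ones b' = y @ us \<and> us @ v = zeros a @ ones b
     \<or> u @ zeros a' @ ones b' @ us = y \<and> v = us @ zeros a @ ones b"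
    unfolding append_eq_append_conv2 by auto
  then show ?thesis
  proof
    assume "u @ zeros a' @ ones b' = y @ us \<and> us @ v = zeros a @ ones b"
    then have prefix_eq: "u @ zeros a' @ ones b' = y @ us" and suffix_eq: "us @ v = zeros a @ ones b"
      by blast+
    have "us = []"
    proof (rule ccontr)
      assume "us \<noteq> []"
      have "last (y @ us)"
        unfolding prefix_eq[symmetric] using \<open>0 < b'\<close> by (simp add: last_append)
      then have "last us" using \<open>us \<noteq> []\<close> by simp
      then have "True \<in> set us" using \<open>us \<noteq> []\<close> last_in_set by fastforce
      moreover have "False \<in> set v"
        using \<open>v \<noteq> []\<close> \<open>\<not> hd v\<close> hd_in_set by fastforce
      moreover have "sorted (us @ v)"
        unfolding suffix_eq by (simp add: sorted_append)
      ultimately show False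
        by (auto simp: sorted_append)
    qed
    with prefix_eq show ?thesis by (intro exI[of _ "[]"]) simp
  next
    assume "u @ zeros a' @ ones b' @ us = y \<and> v = us @ zeros a @ ones b"
    then show ?thesis using \<open>v \<noteq> []\<close> \<open>\<not> hd v\<close> by (cases us) auto
  qed
qed

lemma q_decreasing_append_run:
  assumes q: "0 < q" and a: "0 < a" and y: "y = [] \<or> last y"
  shows "q_decreasing q (y @ zeros a @ ones b) \<longleftrightarrow> q_decreasing q y \<and> b < q * a"
proof
  assume H: "q_decreasing q (y @ zeros a @ ones b)"
  have "b < q * a"
    using H[unfolded q_decreasing_iff_runs[OF q], rule_format, of y a b "[]"] a y by simp
  moreover have "q_decreasing q y"
    unfolding q_decreasing_iff_runs[OF q]
  proof (intro allI impI)
    fix u a' b' v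
    assume run: "y = u @ zeros a' @ ones b' @ v \<and> 0 < a' \<and> (u = [] \<or> last u) \<and> (v = [] \<or> \<not> hd v)"
    have "v @ zeros a @ ones b = [] \<or> \<not> hd (v @ zeros a @ ones b)"
      using run a by (cases v; cases a) auto
    then show "b' < q * a'"
      using H[unfolded q_decreasing_iff_runs[OF q], rule_format, of u a' b' "v @ zeros a @ ones b"] run
      by simp
  qed
  ultimately show "q_decreasing q y \<and> b < q * a" by blast
next
  assume H: "q_decreasing q y \<and> b < q * a"
  show "q_decreasing q (y @ zeros a @ ones b)"
    unfolding q_decreasing_iff_runs[OF q]
  proof (intro allI impI)
    fix u a' b' v
    assume run: "y @ zeros a @ ones b = u @ zeros a' @ ones b' @ v \<and> 0 < a' \<and> (u = [] \<or> last u)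
      \<and> (v = [] \<or> \<not> hd v)"
    consider "b' = 0" | "v = []" | "0 < b'" "v \<noteq> []" "\<not> hd v"
      using run by blast
    then show "b' < q * a'"
    proof cases
      case 1
      then show ?thesis using run q by simp
    next
      case 2
      then have "a = a' \<and> b = b'"
        using final_run_unique[of y a b u a' b'] run a y by simp
      then show ?thesis using H by simp
    next
      case 3
      then obtain v' where "y = u @ zeros a' @ ones b' @ v'" "v' = [] \<or> \<not> hd v'"
        using nonfinal_run_within_prefix[of y a b u a' b' v] run by blast
      then show ?thesis
        using H[THEN conjunct1, unfolded q_decreasing_iff_runs[OF q], rule_format, of u a' b' v'] run
        by blast
    qed
  qed
qed

lemma trailing_zeros_split:
  obtains y' c where "y = y' @ zeros c" "y' = [] \<or> last y'"
proof (induction y arbitrary: thesis rule: rev_induct)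
  case Nil
  then show ?case by simp
next
  case (snoc x y)
  show ?case
  proof (cases x)
    case True
    then show ?thesis using snoc.prems[of "y @ [x]" 0] by simp
  next
    case False
    obtain y' c where "y = y' @ zeros c" "y' = [] \<or> last y'" using snoc.IH by blast
    then show ?thesis
      using snoc.prems[of y' "Suc c"] False by (simp add: replicate_append_same[symmetric])
  qed
qed

lemma q_decreasing_append_False_ones:
  assumes q: "0 < q" and y: "y = y' @ zeros c" "y' = [] \<or> last y'"
  shows "q_decreasing q (y @ False # ones k) \<longleftrightarrow> q_decreasing q y' \<and> k < q * Suc c"
proof -
  have "y @ False # ones k = y' @ zeros (Suc c) @ ones k"
    using y by (simp add: replicate_append_same[symmetric])
  then show ?thesis
    by (simp only: q_decreasing_append_run[OF q zero_less_Suc y(2)])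
qed

lemma q_decreasing_append_zeros:
  assumes q: "0 < q" and y: "y' = [] \<or> last y'"
  shows "q_decreasing q (y' @ zeros c) \<longleftrightarrow> q_decreasing q y'"
  using q_decreasing_append_run[OF q _ y, of c 0] q by (cases c) simp_all

lemma q_decreasing_append_short_run:
  assumes q: "0 < q" and k: "k < q"
  shows "q_decreasing q (y @ False # ones k) \<longleftrightarrow> q_decreasing q y"
proof -
  obtain y' c where y: "y = y' @ zeros c" "y' = [] \<or> last y'" by (rule trailing_zeros_split)
  have "k < q * Suc c" using k by (simp add: less_le_trans)
  then show ?thesis
    using q_decreasing_append_False_ones[OF q y] q_decreasing_append_zeros[OF q y(2)] y(1) by simp
qed

lemma q_decreasing_psi_iff:
  assumes q: "0 < q"
  shows "q_decreasing q (psi q u) \<longleftrightarrow> q_decreasing q u"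
proof (cases u rule: ones_suffix_cases)
  case (ones m)
  then show ?thesis by (simp only: psi_ones q_decreasing_ones)
next
  case (block y k)
  obtain y' c where y: "y = y' @ zeros c" "y' = [] \<or> last y'" by (rule trailing_zeros_split)
  have y_False: "y @ [False] = y' @ zeros (Suc c)"
    using y by (simp add: replicate_append_same[symmetric])
  have "psi q u = (y @ [False]) @ False # ones (k + q)"
    by (simp add: block psi_append_False_ones)
  then have "q_decreasing q (psi q u) \<longleftrightarrow> q_decreasing q y' \<and> k + q < q * Suc (Suc c)"
    by (simp only: q_decreasing_append_False_ones[OF q y_False y(2)])
  also have "\<dots> \<longleftrightarrow> q_decreasing q u"
    using q_decreasing_append_False_ones[OF q y, of k] block by simp
  finally show ?thesis .
qed

lemma long_run_in_psi_image:
  assumes q: "0 < q" and k: "q \<le> k" and H: "q_decreasing q (y @ False # ones k)"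
  shows "\<exists>u. psi q u = y @ False # ones k"
proof -
  obtain y' c where y: "y = y' @ zeros c" "y' = [] \<or> last y'" by (rule trailing_zeros_split)
  have "k < q * Suc c" using H q_decreasing_append_False_ones[OF q y] by simp
  then obtain c' where "c = Suc c'" using k by (cases c) auto
  then have "y = (y' @ zeros c') @ [False]"
    using y by (simp add: replicate_append_same[symmetric])
  then have "psi q ((y' @ zeros c') @ False # ones (k - q)) = y @ False # ones k"
    using k by (simp only: psi_append_False_ones) simp
  then show ?thesis ..
qed

lemma q_decreasing_phi:
  assumes q: "0 < q"
  shows "avoids_ones q w \<Longrightarrow> q_decreasing q (phi q w)"
proof (induction "length w" arbitrary: w rule: less_induct)
  case less
  show ?case
  proof (cases w rule: ones_prefix_cases)
    case (ones k)
    then show ?thesis by (simp add: phi_ones q_decreasing_ones)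
  next
    case (block k v)
    then have "k \<le> q" "q_decreasing q (phi q v)"
      using less by auto
    then show ?thesis
      by (simp add: block phi_ones_False q_decreasing_psi_iff[OF q] q_decreasing_append_short_run[OF q])
  qed
qed

lemma q_decreasing_cases:
  assumes q: "0 < q" and x: "q_decreasing q x"
  obtains (ones) m where "x = ones m" "m \<le> q"
    | (short) y k where "x = y @ False # ones k" "k < q" "q_decreasing q y"
    | (long) u where "x = psi q u" "q_decreasing q u"
proof (cases x rule: ones_suffix_cases)
  case (ones m)
  show thesis
  proof (cases "m \<le> q")
    case True
    then show thesis using that(1) ones by blast
  next
    case False
    then have "x = psi q (ones (m - q - 1))" using ones by (simp add: psi_ones)
    then show thesis using that(3) q_decreasing_ones by blast
  qed
next
  case (block y k)
  show thesis
  proof (cases "k < q")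
    case True
    then show thesis
      using that(2) block x q_decreasing_append_short_run[OF q] by blast
  next
    case False
    then obtain u where u: "psi q u = x"
      using long_run_in_psi_image[OF q, of k y] x block by auto
    moreover have "q_decreasing q u"
      using x u q_decreasing_psi_iff[OF q, of u] by simp
    ultimately show thesis using that(3)[OF u[symmetric]] by blast
  qed
qed

lemma q_decreasing_in_phi_image:
  assumes q: "0 < q"
  shows "q_decreasing q x \<Longrightarrow> \<exists>w. avoids_ones q w \<and> phi q w = x"
proof (induction "length x" arbitrary: x rule: less_induct)
  case less
  from q less.prems show ?case
  proof (cases rule: q_decreasing_cases)
    case (ones m)
    then show ?thesis by (intro exI[of _ x]) (simp add: phi_ones)
  next
    case (short y k)
    then obtain v where "avoids_ones q v" "phi q v = y"
      using less.hyps[of y] by auto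
    then show ?thesis
      using short by (intro exI[of _ "ones k @ False # v"]) (simp add: phi_ones_False)
  next
    case (long u)
    then obtain v where "avoids_ones q v" "phi q v = u"
      using less.hyps[of u] by auto
    then show ?thesis
      using long by (intro exI[of _ "ones q @ False # v"]) (simp add: phi_ones_False)
  qed
qed

theorem theorem1:
  fixes q n :: nat
  assumes "1 \<le> q"
  shows "bij_betw (phi q) (avoid_words q n) (W_words q n)"
proof -
  have q: "0 < q" using assms by simp
  have avoid: "avoid_words q n = {w. avoids_ones q w} \<inter> {w. length w = n}"
    by (auto simp: avoid_words_def binwords_def avoids_ones_def)
  have "phi q ` avoid_words q n = W_words q n"
  proof
    show "phi q ` avoid_words q n \<subseteq> W_words q n"
      using q_decreasing_phi[OF q] by (auto simp: avoid W_words_def binwords_def)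
    show "W_words q n \<subseteq> phi q ` avoid_words q n"
      using q_decreasing_in_phi_image[OF q] by (force simp: avoid W_words_def binwords_def)
  qed
  moreover have "inj_on (phi q) (avoid_words q n)"
    using inj_on_phi by (rule inj_on_subset) (simp add: avoid)
  ultimately show ?thesis by (simp add: bij_betw_def)
qed

end
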